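(* Let $\mathcal E$ and $\mathcal F$ be product systems with normalized units $u^0$ and $v^0$ respectively, let $C_t=|u^0_t\rangle\langle v^0_t|:\mathcal F_t\to\mathcal E_t$, and let $\sigma$ be the common unit of $\mathcal E\otimes_C\mathcal F$ obtained by identifying $u^0$ and $v^0$ (i.e. $\sigma_t=I_t(u^0_t)=J_t(v^0_t)$). Then $\mathcal R^{\mathcal E\otimes_C\mathcal F}_\sigma=\mathcal R^{\mathcal E}_{u^0}\oplus\mathcal R^{\mathcal F}_{v^0}$, an orthogonal direct sum (with $\mathcal R^{\mathcal E}_{u^0}$ and $\mathcal R^{\mathcal F}_{v^0}$ embedded via $I_1$ and $J_1$).
   Context: Product systems are measurable families of separable Hilbert spaces $(\mathcal E_t)_{t>0}$ with associative unitaries $W_{s,t}:\mathcal E_{s+t}\to\mathcal E_s\otimes\mathcal E_t$. A unit is a measurable section $(u_t)$ of nonzero vectors with $W_{s,t}u_{s+t}=u_s\otimes u_t$, normalized if $\|u_t\|=1$. For a contractive morphism $C$ (contractions $C_t:\mathcal F_t\to\mathcal E_t$ with $W^{\mathcal E}_{s,t}C_{s+t}=(C_s\otimes C_t)W^{\mathcal F}_{s,t}$), the amalgamated product $\mathcal E\otimes_C\mathcal F$ is the algebraic product system $\mathcal G$ with isometric morphisms $I:\mathcal E\to\mathcal G$, $J:\mathcal F\to\mathcal G$ satisfying $\langle I_sx,J_sy\rangle=\langle x,C_sy\rangle$ and generated by $I(\mathcal E)$ and $J(\mathcal F)$. An additive unit of a unit $u$ is a measurable section $(a_t)$ with $W_{s,t}a_{s+t}=a_s\otimes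 u_t+u_s\otimes a_t$; a root additionally satisfies $\langle a_t,u_t\rangle=0$ for all $t$; $\mathcal R^{\mathcal E}_u:=\{a_1:a \text{ a root of } u\}\subset\mathcal E_1$. *)

theory Defs
  imports "HOL-Analysis.Analysis"
begin

text \<open>The library only has real inner product spaces. The complex inner product
  (conjugate-linear in the first, linear in the second argument) is then recovered from
  the real one; its real part is the real inner product.\<close>

class complex_inner = real_inner +
  fixes scaleC :: "complex \<Rightarrow> 'a \<Rightarrow> 'a"
  assumes scaleC_add_right: "scaleC a (x + y) = scaleC a x + scaleC a y"
    and scaleC_add_left: "scaleC (a + b) x = scaleC a x + scaleC b x"
    and scaleC_scaleC: "scaleC a (scaleC b x) = scaleC (a * b) x"
    and scaleC_of_real: "scaleC (complex_of_real r) x = scaleR r x"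
    and inner_scaleC_ii: "inner (scaleC \<i> x) (scaleC \<i> y) = inner x y"

definition cinner :: "'a::complex_inner \<Rightarrow> 'a \<Rightarrow> complex" where
  "cinner x y = complex_of_real (inner x y) - \<i> * complex_of_real (inner x (scaleC \<i> y))"

definition csubspace :: "'a::complex_inner set \<Rightarrow> bool" where
  "csubspace V \<longleftrightarrow> 0 \<in> V \<and> (\<forall>x\<in>V. \<forall>y\<in>V. x + y \<in> V) \<and> (\<forall>c. \<forall>x\<in>V. scaleC c x \<in> V)"

definition cspan :: "'a::complex_inner set \<Rightarrow> 'a set" where
  "cspan A = \<Inter>{V. csubspace V \<and> A \<subseteq> V}"

text \<open>A product system over the ambient complex inner product space \<open>'a\<close> is given by the
  fibres \<open>E t \<subseteq> 'a\<close> (\<open>t > 0\<close>), separable Hilbert spaces, and the multiplication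
  \<open>m s t x y = W_{s,t}^* (x \<otimes> y)\<close>. The unitaries \<open>W_{s,t}\<close> correspond exactly to maps
  \<open>m s t\<close> which preserve inner products of elementary tensors and have total range;
  associativity of \<open>W\<close> is associativity of \<open>m\<close>.\<close>

definition product_system ::
  "(real \<Rightarrow> 'a::complex_inner set) \<Rightarrow> (real \<Rightarrow> real \<Rightarrow> 'a \<Rightarrow> 'a \<Rightarrow> 'a) \<Rightarrow> bool" where
  "product_system E m \<longleftrightarrow>
     (\<forall>t>0. csubspace (E t) \<and> complete (E t) \<and>
            (\<exists>D. countable D \<and> D \<subseteq> E t \<and> E t \<subseteq> closure D)) \<and>
     (\<forall>s>0. \<forall>t>0. \<forall>x\<in>E s. \<forall>y\<in>E t. m s t x y \<in> E (s + t)) \<and>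
     (\<forall>s>0. \<forall>t>0. \<forall>x\<in>E s. \<forall>x'\<in>E s. \<forall>y\<in>E t. \<forall>y'\<in>E t.
        cinner (m s t x y) (m s t x' y') = cinner x x' * cinner y y') \<and>
     (\<forall>s>0. \<forall>t>0. E (s + t) \<subseteq> closure (cspan {m s t x y |x y. x \<in> E s \<and> y \<in> E t})) \<and>
     (\<forall>r>0. \<forall>s>0. \<forall>t>0. \<forall>x\<in>E r. \<forall>y\<in>E s. \<forall>z\<in>E t.
        m (r + s) t (m r s x y) z = m r (s + t) x (m s t y z))"

definition is_unit ::
  "(real \<Rightarrow> 'a::complex_inner set) \<Rightarrow> (real \<Rightarrow> real \<Rightarrow> 'a \<Rightarrow> 'a \<Rightarrow> 'a) \<Rightarrow> (real \<Rightarrow> 'a) \<Rightarrow> bool" where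
  "is_unit E m u \<longleftrightarrow> (\<forall>t>0. u t \<in> E t \<and> u t \<noteq> 0) \<and>
     (\<forall>s>0. \<forall>t>0. u (s + t) = m s t (u s) (u t))"

definition normalized_unit ::
  "(real \<Rightarrow> 'a::complex_inner set) \<Rightarrow> (real \<Rightarrow> real \<Rightarrow> 'a \<Rightarrow> 'a \<Rightarrow> 'a) \<Rightarrow> (real \<Rightarrow> 'a) \<Rightarrow> bool" where
  "normalized_unit E m u \<longleftrightarrow> is_unit E m u \<and> (\<forall>t>0. norm (u t) = 1)"

definition additive_unit ::
  "(real \<Rightarrow> 'a::complex_inner set) \<Rightarrow> (real \<Rightarrow> real \<Rightarrow> 'a \<Rightarrow> 'a \<Rightarrow> 'a) \<Rightarrow> (real \<Rightarrow> 'a) \<Rightarrow> (real \<Rightarrow> 'a) \<Rightarrow> bool" where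
  "additive_unit E m u a \<longleftrightarrow> (\<forall>t>0. a t \<in> E t) \<and>
     (\<forall>s>0. \<forall>t>0. a (s + t) = m s t (a s) (u t) + m s t (u s) (a t))"

definition is_root ::
  "(real \<Rightarrow> 'a::complex_inner set) \<Rightarrow> (real \<Rightarrow> real \<Rightarrow> 'a \<Rightarrow> 'a \<Rightarrow> 'a) \<Rightarrow> (real \<Rightarrow> 'a) \<Rightarrow> (real \<Rightarrow> 'a) \<Rightarrow> bool" where
  "is_root E m u a \<longleftrightarrow> additive_unit E m u a \<and> (\<forall>t>0. cinner (a t) (u t) = 0)"

definition roots ::
  "(real \<Rightarrow> 'a::complex_inner set) \<Rightarrow> (real \<Rightarrow> real \<Rightarrow> 'a \<Rightarrow> 'a \<Rightarrow> 'a) \<Rightarrow> (real \<Rightarrow> 'a) \<Rightarrow> 'a set" where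
  "roots E m u = {a 1 |a. is_root E m u a}"

definition isometric_morphism ::
  "(real \<Rightarrow> 'a::complex_inner set) \<Rightarrow> (real \<Rightarrow> real \<Rightarrow> 'a \<Rightarrow> 'a \<Rightarrow> 'a) \<Rightarrow>
   (real \<Rightarrow> 'b::complex_inner set) \<Rightarrow> (real \<Rightarrow> real \<Rightarrow> 'b \<Rightarrow> 'b \<Rightarrow> 'b) \<Rightarrow>
   (real \<Rightarrow> 'a \<Rightarrow> 'b) \<Rightarrow> bool" where
  "isometric_morphism E mE G mG I \<longleftrightarrow>
     (\<forall>t>0. \<forall>x\<in>E t. I t x \<in> G t) \<and>
     (\<forall>t>0. \<forall>x\<in>E t. \<forall>y\<in>E t. I t (x + y) = I t x + I t y \<and> (\<forall>c. I t (scaleC c x) = scaleC c (I t x))) \<and>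
     (\<forall>t>0. \<forall>x\<in>E t. \<forall>y\<in>E t. cinner (I t x) (I t y) = cinner x y) \<and>
     (\<forall>s>0. \<forall>t>0. \<forall>x\<in>E s. \<forall>y\<in>E t. I (s + t) (mE s t x y) = mG s t (I s x) (I t y))"

text \<open>\<open>G\<close> is generated by \<open>I(E)\<close> and \<open>J(F)\<close>: the only family of closed subspaces of the
  fibres of \<open>G\<close> that contains \<open>I_t(E_t)\<close> and \<open>J_t(F_t)\<close> and is closed under the product
  is \<open>G\<close> itself (the smallest such family is the generated product subsystem).\<close>

definition generated_by ::
  "(real \<Rightarrow> 'g::complex_inner set) \<Rightarrow> (real \<Rightarrow> real \<Rightarrow> 'g \<Rightarrow> 'g \<Rightarrow> 'g) \<Rightarrow> (real \<Rightarrow> 'g set) \<Rightarrow> bool" where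
  "generated_by G mG S \<longleftrightarrow>
     (\<forall>H. (\<forall>t>0. csubspace (H t) \<and> closed (H t) \<and> S t \<subseteq> H t \<and> H t \<subseteq> G t) \<and>
          (\<forall>s>0. \<forall>t>0. \<forall>x\<in>H s. \<forall>y\<in>H t. mG s t x y \<in> H (s + t))
          \<longrightarrow> (\<forall>t>0. H t = G t))"

text \<open>Amalgamated product \<open>E \<otimes>_C F\<close> with respect to \<open>C_t : F_t \<rightarrow> E_t\<close> (algebraic product
  system, i.e. no measurable structure is required).\<close>

definition amalgamated_product ::
  "(real \<Rightarrow> 'e::complex_inner set) \<Rightarrow> (real \<Rightarrow> real \<Rightarrow> 'e \<Rightarrow> 'e \<Rightarrow> 'e) \<Rightarrow>
   (real \<Rightarrow> 'f::complex_inner set) \<Rightarrow> (real \<Rightarrow> real \<Rightarrow> 'f \<Rightarrow> 'f \<Rightarrow> 'f) \<Rightarrow>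
   (real \<Rightarrow> 'f \<Rightarrow> 'e) \<Rightarrow>
   (real \<Rightarrow> 'g::complex_inner set) \<Rightarrow> (real \<Rightarrow> real \<Rightarrow> 'g \<Rightarrow> 'g \<Rightarrow> 'g) \<Rightarrow>
   (real \<Rightarrow> 'e \<Rightarrow> 'g) \<Rightarrow> (real \<Rightarrow> 'f \<Rightarrow> 'g) \<Rightarrow> bool" where
  "amalgamated_product E mE F mF C G mG I J \<longleftrightarrow>
     product_system G mG \<and>
     isometric_morphism E mE G mG I \<and> isometric_morphism F mF G mG J \<and>
     (\<forall>t>0. \<forall>x\<in>E t. \<forall>y\<in>F t. cinner (I t x) (J t y) = cinner x (C t y)) \<and>
     generated_by G mG (\<lambda>t. I t ` E t \<union> J t ` F t)"

end

(* Since <I_t u0_t, J_t v0_t> = <u0_t, C_t v0_t> = 1 for unit vectors, I u0 = J v0 =: sigma, so I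
   and J map roots of u0 and v0 to roots of sigma; as C_t annihilates roots, these images are
   orthogonal. Conversely, for a root c of sigma the adjoint families a_t = I_t^* c_t and
   b_t = J_t^* c_t are roots of u0 and v0, because vectors of a product system are determined by
   their inner products with products. Then c - (I a + J b) is orthogonal to I(E) and J(F). The
   vectors against which two additive units of sigma have equal inner products form a product
   subsystem of G containing I(E) and J(F), hence all of G, so c = I a + J b. *)

theory Submission
  imports Defs
begin

lemma scaleC_zero_left [simp]: "scaleC 0 x = 0"
  using scaleC_of_real[of 0 x] by simp

lemma scaleC_minus_one: "scaleC (-1) x = - x"
  using scaleC_of_real[of "-1" x] by simp

lemma scaleC_ii_ii: "scaleC \<i> (scaleC \<i> x) = - x"
  by (simp add: scaleC_scaleC scaleC_minus_one)

lemma scaleC_ii_scaleR: "scaleC \<i> (r *\<^sub>R x) = r *\<^sub>R scaleC \<i> x"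
  by (metis scaleC_of_real scaleC_scaleC mult.commute)

lemma inner_scaleC_ii_left: "inner (scaleC \<i> x) y = - inner x (scaleC \<i> y)"
  using inner_scaleC_ii[of x "scaleC \<i> y"] by (simp add: scaleC_ii_ii)

lemma scaleC_Re_Im: "scaleC c x = Re c *\<^sub>R x + Im c *\<^sub>R scaleC \<i> x"
proof -
  have "c = complex_of_real (Re c) + complex_of_real (Im c) * \<i>"
    by (simp add: complex_eq_iff)
  then have "scaleC c x = scaleC (complex_of_real (Re c)) x + scaleC (complex_of_real (Im c) * \<i>) x"
    by (metis scaleC_add_left)
  then show ?thesis
    by (simp add: scaleC_of_real flip: scaleC_scaleC)
qed

lemma cinner_add_right: "cinner x (y + z) = cinner x y + cinner x z"
  by (simp add: cinner_def scaleC_add_right inner_add_right algebra_simps)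

lemma cinner_add_left: "cinner (x + y) z = cinner x z + cinner y z"
  by (simp add: cinner_def inner_add_left algebra_simps)

lemma cinner_commute: "cinner y x = cnj (cinner x y)"
proof -
  have "inner x (scaleC \<i> y) = - inner y (scaleC \<i> x)"
    by (metis inner_scaleC_ii_left inner_commute)
  then show ?thesis
    by (simp add: cinner_def complex_eq_iff inner_commute)
qed

lemma cinner_scaleC_right: "cinner x (scaleC c y) = c * cinner x y"
proof -
  have "cinner x (scaleC c y) = (complex_of_real (Re c) + complex_of_real (Im c) * \<i>) * cinner x y"
    by (subst scaleC_Re_Im)
      (simp add: cinner_def scaleC_add_right scaleC_ii_scaleR scaleC_ii_ii inner_add_right
        algebra_simps)
  also have "complex_of_real (Re c) + complex_of_real (Im c) * \<i> = c"
    by (simp add: complex_eq_iff)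
  finally show ?thesis .
qed

lemma cinner_scaleC_left: "cinner (scaleC c x) y = cnj c * cinner x y"
  by (metis cinner_commute cinner_scaleC_right complex_cnj_mult)

lemma cinner_zero_left [simp]: "cinner 0 x = 0"
  by (simp add: cinner_def)

lemma cinner_minus_right: "cinner x (- y) = - cinner x y"
  using cinner_scaleC_right[of x "-1" y] by (simp add: scaleC_minus_one)

lemma cinner_diff_right: "cinner x (y - z) = cinner x y - cinner x z"
  using cinner_add_right[of x y "- z"] by (simp add: cinner_minus_right)

lemma cinner_diff_left: "cinner (x - y) z = cinner x z - cinner y z"
  by (metis cinner_commute cinner_diff_right complex_cnj_diff)

lemma cinner_self: "cinner x x = complex_of_real ((norm x)\<^sup>2)"
  using inner_scaleC_ii_left[of x x] by (simp add: cinner_def inner_commute power2_norm_eq_inner)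

lemma cinner_self_eq_0_iff [simp]: "cinner x x = 0 \<longleftrightarrow> x = 0"
  by (simp add: cinner_self)

lemma cinner_eq_0_iff_inner:
  "cinner x y = 0 \<longleftrightarrow> inner x y = 0 \<and> inner (scaleC \<i> x) y = 0"
  by (simp add: cinner_def complex_eq_iff inner_scaleC_ii_left)

lemma cinner_eq_1_imp_eq:
  assumes "cinner x x = 1" and "cinner y y = 1" and "cinner x y = 1"
  shows "x = y"
proof -
  have "cinner (x - y) (x - y) = 0"
    unfolding cinner_diff_left cinner_diff_right
    using assms cinner_commute[of y x] by simp
  then show ?thesis by simp
qed

lemma closed_cinner_orthogonal: "closed {x. cinner x z = 0}"
  unfolding cinner_def by (intro closed_Collect_eq continuous_intros)

lemma csubspace_cinner_orthogonal: "csubspace {x. cinner x z = 0}"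
  by (simp add: csubspace_def cinner_add_left cinner_scaleC_left)

lemma csubspace_Int: "csubspace A \<Longrightarrow> csubspace B \<Longrightarrow> csubspace (A \<inter> B)"
  by (simp add: csubspace_def)

lemma csubspace_imp_subspace: "csubspace V \<Longrightarrow> subspace V"
  unfolding csubspace_def subspace_def by (metis scaleC_of_real)

section \<open>Orthogonal projection and adjoints\<close>

lemma Cauchy_minimizing_sequence:
  fixes K :: "'a::real_inner set"
  assumes "convex K" and fK: "\<And>n. f n \<in> K"
    and lower: "\<And>q. q \<in> K \<Longrightarrow> \<delta> \<le> (dist c q)\<^sup>2"
    and fle: "\<And>n. (dist c (f n))\<^sup>2 < \<delta> + 1 / (real n + 1)"
  shows "Cauchy f"
proof (rule metric_CauchyI)
  have bound: "(dist (f m) (f n))\<^sup>2 \<le> 2 / (real m + 1) + 2 / (real n + 1)" for m n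
  proof -
    let ?mid = "(1/2) *\<^sub>R f m + (1/2) *\<^sub>R f n"
    have "?mid \<in> K"
      using convexD[OF \<open>convex K\<close> fK fK] by simp
    then have "\<delta> \<le> (dist c ?mid)\<^sup>2"
      by (rule lower)
    moreover \<comment> \<open>the parallelogram law for \<open>c - f m\<close> and \<open>c - f n\<close>\<close>
    have "4 * (dist c ?mid)\<^sup>2 + (dist (f m) (f n))\<^sup>2 = 2 * (dist c (f m))\<^sup>2 + 2 * (dist c (f n))\<^sup>2"
      unfolding dist_norm power2_norm_eq_inner
      by (simp add: inner_add_left inner_add_right inner_diff_left inner_diff_right inner_commute
          algebra_simps)
    ultimately show ?thesis
      using fle[of m] fle[of n] by linarith
  qed
  fix e :: real
  assume "e > 0"
  obtain M :: nat where M: "4 / e\<^sup>2 < real M + 1"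
    using reals_Archimedean2[of "4 / e\<^sup>2"] by (meson less_add_one less_trans)
  have "dist (f m) (f n) < e" if "M \<le> m" "M \<le> n" for m n
  proof -
    have "4 / (real M + 1) < e\<^sup>2"
      using M \<open>e > 0\<close> by (simp add: field_simps)
    moreover have "2 / (real m + 1) \<le> 2 / (real M + 1)" "2 / (real n + 1) \<le> 2 / (real M + 1)"
      using that by (simp_all add: frac_le)
    ultimately have "(dist (f m) (f n))\<^sup>2 < e\<^sup>2"
      using bound[of m n] by linarith
    then show ?thesis
      using \<open>e > 0\<close> by (simp add: power_less_imp_less_base)
  qed
  then show "\<exists>M. \<forall>m\<ge>M. \<forall>n\<ge>M. dist (f m) (f n) < e"
    by blast
qed

lemma complete_convex_closest_point:
  fixes K :: "'a::real_inner set"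
  assumes "complete K" and "convex K" and "K \<noteq> {}"
  obtains p where "p \<in> K" and "\<And>q. q \<in> K \<Longrightarrow> dist c p \<le> dist c q"
proof -
  define \<delta> where "\<delta> = Inf {(dist c q)\<^sup>2 | q. q \<in> K}"
  have lower: "\<delta> \<le> (dist c q)\<^sup>2" if "q \<in> K" for q
    unfolding \<delta>_def using that by (intro cInf_lower bdd_belowI[of _ 0]) auto
  have "\<exists>q\<in>K. (dist c q)\<^sup>2 < \<delta> + 1 / (real n + 1)" for n
    using cInf_lessD[of "{(dist c q)\<^sup>2 | q. q \<in> K}" "\<delta> + 1 / (real n + 1)"] \<open>K \<noteq> {}\<close>
    unfolding \<delta>_def by fastforce
  then obtain f where fK: "\<And>n. f n \<in> K" and fle: "\<And>n. (dist c (f n))\<^sup>2 < \<delta> + 1 / (real n + 1)"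
    by metis
  obtain p where "p \<in> K" and lim: "f \<longlonglongrightarrow> p"
    using \<open>complete K\<close> Cauchy_minimizing_sequence[OF \<open>convex K\<close> fK lower fle] fK
    unfolding complete_def by blast
  have "(\<lambda>n. (dist c (f n))\<^sup>2) \<longlonglongrightarrow> (dist c p)\<^sup>2"
    by (intro tendsto_intros lim)
  moreover have "(\<lambda>n. \<delta> + 1 / (real n + 1)) \<longlonglongrightarrow> \<delta>"
    using LIMSEQ_inverse_real_of_nat_add[of \<delta>] by (simp add: inverse_eq_divide add.commute)
  ultimately have "(dist c p)\<^sup>2 \<le> \<delta>"
    by (rule LIMSEQ_le) (use fle less_imp_le in auto)
  then have "dist c p \<le> dist c q" if "q \<in> K" for q
    using lower[OF that] by (simp add: power2_le_imp_le)
  with \<open>p \<in> K\<close> show ?thesis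
    using that by blast
qed

lemma complete_csubspace_orthogonal_projection:
  assumes "complete K" and "csubspace K"
  obtains p where "p \<in> K" and "\<And>k. k \<in> K \<Longrightarrow> cinner k (c - p) = 0"
proof -
  have K: "subspace K"
    using \<open>csubspace K\<close> by (rule csubspace_imp_subspace)
  obtain p where "p \<in> K" and closest: "\<And>q. q \<in> K \<Longrightarrow> dist c p \<le> dist c q"
    using complete_convex_closest_point[OF \<open>complete K\<close> subspace_imp_convex[OF K]] subspace_0[OF K]
    by blast
  have real_orth: "inner k (c - p) = 0" if "k \<in> K" for k
  proof -
    have "inner (c - p) ((p + s *\<^sub>R k) - p) \<le> 0" for s
    proof (rule any_closest_point_dot)
      show "p + s *\<^sub>R k \<in> K"
        using K \<open>p \<in> K\<close> that by (simp add: subspace_add subspace_scale)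
    qed (use K \<open>complete K\<close> \<open>p \<in> K\<close> closest in \<open>auto simp: subspace_imp_convex complete_imp_closed\<close>)
    from this[of 1] this[of "-1"] show ?thesis
      by (simp add: inner_commute)
  qed
  have "cinner k (c - p) = 0" if "k \<in> K" for k
    using real_orth[OF that] real_orth[of "scaleC \<i> k"] that \<open>csubspace K\<close>
    by (simp add: cinner_eq_0_iff_inner csubspace_def)
  with \<open>p \<in> K\<close> show ?thesis
    using that by blast
qed

definition clinear_isometry_on :: "'a::complex_inner set \<Rightarrow> ('a \<Rightarrow> 'b::complex_inner) \<Rightarrow> bool" where
  "clinear_isometry_on S V \<longleftrightarrow>
     (\<forall>x\<in>S. \<forall>y\<in>S. V (x + y) = V x + V y \<and> cinner (V x) (V y) = cinner x y) \<and>
     (\<forall>c. \<forall>x\<in>S. V (scaleC c x) = scaleC c (V x))"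

lemma
  assumes "clinear_isometry_on S V" and "x \<in> S" and "y \<in> S"
  shows clinear_isometry_on_add: "V (x + y) = V x + V y"
    and clinear_isometry_on_cinner: "cinner (V x) (V y) = cinner x y"
  using assms unfolding clinear_isometry_on_def by simp_all

lemma complete_isometric_image_on:
  assumes "complete S" and iso: "\<And>x y. x \<in> S \<Longrightarrow> y \<in> S \<Longrightarrow> dist (f x) (f y) = dist x y"
  shows "complete (f ` S)"
  unfolding complete_def
proof (intro allI impI)
  fix \<phi> assume \<phi>: "(\<forall>n. \<phi> n \<in> f ` S) \<and> Cauchy \<phi>"
  then have "\<forall>n. \<exists>x. x \<in> S \<and> \<phi> n = f x"
    by blast
  from choice[OF this] obtain g where gS: "\<And>n. g n \<in> S" and \<phi>_g: "\<And>n. \<phi> n = f (g n)"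
    by blast
  have "Cauchy g"
    using \<phi> by (simp add: Cauchy_def \<phi>_g iso gS)
  then obtain l where "l \<in> S" and "g \<longlonglongrightarrow> l"
    using \<open>complete S\<close> gS unfolding complete_def by blast
  then have "(\<lambda>n. dist (\<phi> n) (f l)) \<longlonglongrightarrow> 0"
    by (simp add: tendsto_dist_iff[symmetric] \<phi>_g iso gS)
  then have "\<phi> \<longlonglongrightarrow> f l"
    by (rule tendsto_dist_iff[THEN iffD2])
  with \<open>l \<in> S\<close> show "\<exists>l\<in>f ` S. \<phi> \<longlonglongrightarrow> l"
    by blast
qed

lemma dist_eq_if_cinner_preserving:
  assumes V: "\<And>x y. x \<in> S \<Longrightarrow> y \<in> S \<Longrightarrow> cinner (V x) (V y) = cinner x y"
    and "x \<in> S" "y \<in> S"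
  shows "dist (V x) (V y) = dist x y"
proof -
  have "cinner (V x - V y) (V x - V y) = cinner (x - y) (x - y)"
    unfolding cinner_diff_left cinner_diff_right using assms by simp
  then have "complex_of_real ((norm (V x - V y))\<^sup>2) = complex_of_real ((norm (x - y))\<^sup>2)"
    by (simp only: cinner_self)
  then have "(norm (V x - V y))\<^sup>2 = (norm (x - y))\<^sup>2"
    by (simp only: of_real_eq_iff)
  then show ?thesis
    by (simp add: dist_norm power2_eq_iff_nonneg)
qed

lemma csubspace_linear_image:
  assumes S: "csubspace S"
    and add: "\<And>x y. x \<in> S \<Longrightarrow> y \<in> S \<Longrightarrow> V (x + y) = V x + V y"
    and scale: "\<And>c x. x \<in> S \<Longrightarrow> V (scaleC c x) = scaleC c (V x)"
  shows "csubspace (V ` S)"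
  unfolding csubspace_def
proof (intro conjI ballI allI)
  have "0 \<in> S" using S by (simp add: csubspace_def)
  moreover have "V 0 = 0" using scale[OF \<open>0 \<in> S\<close>, of 0] by simp
  ultimately show "0 \<in> V ` S" by force
next
  fix x y assume "x \<in> V ` S" "y \<in> V ` S"
  then obtain x' y' where "x' \<in> S" "y' \<in> S" "x = V x'" "y = V y'" by blast
  moreover have "x' + y' \<in> S"
    using S \<open>x' \<in> S\<close> \<open>y' \<in> S\<close> by (simp add: csubspace_def)
  ultimately show "x + y \<in> V ` S"
    using add by (intro image_eqI[of _ V "x' + y'"]) simp_all
next
  fix c x assume "x \<in> V ` S"
  then obtain x' where "x' \<in> S" "x = V x'" by blast
  moreover have "scaleC c x' \<in> S"
    using S \<open>x' \<in> S\<close> by (simp add: csubspace_def)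
  ultimately show "scaleC c x \<in> V ` S"
    using scale by (intro image_eqI[of _ V "scaleC c x'"]) simp_all
qed

lemma clinear_isometry_on_adjoint:
  assumes "complete S" and "csubspace S" and V: "clinear_isometry_on S V"
  obtains a where "a \<in> S" and "\<And>e. e \<in> S \<Longrightarrow> cinner (V e) g = cinner e a"
proof -
  have add: "\<And>x y. x \<in> S \<Longrightarrow> y \<in> S \<Longrightarrow> V (x + y) = V x + V y"
    and inner: "\<And>x y. x \<in> S \<Longrightarrow> y \<in> S \<Longrightarrow> cinner (V x) (V y) = cinner x y"
    and scale: "\<And>c x. x \<in> S \<Longrightarrow> V (scaleC c x) = scaleC c (V x)"
    using V unfolding clinear_isometry_on_def by blast+
  have "complete (V ` S)"
    using \<open>complete S\<close> dist_eq_if_cinner_preserving[of S V, OF inner]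
    by (rule complete_isometric_image_on)
  moreover have "csubspace (V ` S)"
    using \<open>csubspace S\<close> add scale by (rule csubspace_linear_image)
  ultimately obtain p where "p \<in> V ` S" and p: "\<And>k. k \<in> V ` S \<Longrightarrow> cinner k (g - p) = 0"
    using complete_csubspace_orthogonal_projection by metis
  then obtain a where "a \<in> S" and "p = V a"
    by blast
  have "cinner (V e) g = cinner e a" if "e \<in> S" for e
    using p[of "V e"] that inner[OF that \<open>a \<in> S\<close>] \<open>p = V a\<close> by (simp add: cinner_diff_right)
  with \<open>a \<in> S\<close> show ?thesis
    using that by blast
qed

lemma
  assumes "product_system E m"
  shows product_system_csubspace: "t > 0 \<Longrightarrow> csubspace (E t)"
    and product_system_complete: "t > 0 \<Longrightarrow> complete (E t)"
    and product_system_mult_mem: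
      "s > 0 \<Longrightarrow> t > 0 \<Longrightarrow> x \<in> E s \<Longrightarrow> y \<in> E t \<Longrightarrow> m s t x y \<in> E (s + t)"
    and product_system_cinner_mult:
      "s > 0 \<Longrightarrow> t > 0 \<Longrightarrow> x \<in> E s \<Longrightarrow> x' \<in> E s \<Longrightarrow> y \<in> E t \<Longrightarrow> y' \<in> E t \<Longrightarrow>
       cinner (m s t x y) (m s t x' y') = cinner x x' * cinner y y'"
    and product_system_total:
      "s > 0 \<Longrightarrow> t > 0 \<Longrightarrow> E (s + t) \<subseteq> closure (cspan {m s t x y |x y. x \<in> E s \<and> y \<in> E t})"
  using assms unfolding product_system_def by simp_all

lemma product_system_eq_if_cinner_mult_eq:
  assumes P: "product_system E m" and "s > 0" "t > 0"
    and "z \<in> E (s + t)" "z' \<in> E (s + t)"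
    and eq: "\<And>x y. x \<in> E s \<Longrightarrow> y \<in> E t \<Longrightarrow> cinner (m s t x y) z = cinner (m s t x y) z'"
  shows "z = z'"
proof -
  let ?V = "{w. cinner w (z - z') = 0}"
  have "{m s t x y |x y. x \<in> E s \<and> y \<in> E t} \<subseteq> ?V"
    using eq by (auto simp: cinner_diff_right)
  then have "cspan {m s t x y |x y. x \<in> E s \<and> y \<in> E t} \<subseteq> ?V"
    unfolding cspan_def using csubspace_cinner_orthogonal by blast
  then have "closure (cspan {m s t x y |x y. x \<in> E s \<and> y \<in> E t}) \<subseteq> ?V"
    using closure_minimal closed_cinner_orthogonal by blast
  moreover have "z - z' \<in> E (s + t)"
    using product_system_csubspace[OF P, of "s + t"] \<open>s > 0\<close> \<open>t > 0\<close> assms(4,5)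
    by (simp add: csubspace_imp_subspace subspace_diff)
  ultimately have "z - z' \<in> ?V"
    using product_system_total[OF P \<open>s > 0\<close> \<open>t > 0\<close>] by blast
  then show ?thesis
    by simp
qed

lemma product_system_add_left:
  assumes P: "product_system E m" and st: "s > 0" "t > 0"
    and "x \<in> E s" "x' \<in> E s" "y \<in> E t"
  shows "m s t (x + x') y = m s t x y + m s t x' y"
proof (rule product_system_eq_if_cinner_mult_eq[OF P st])
  have "x + x' \<in> E s" "\<And>a b. a \<in> E (s + t) \<Longrightarrow> b \<in> E (s + t) \<Longrightarrow> a + b \<in> E (s + t)"
    using assms product_system_csubspace[OF P] by (simp_all add: csubspace_def)
  then show "m s t (x + x') y \<in> E (s + t)" "m s t x y + m s t x' y \<in> E (s + t)"
    using assms product_system_mult_mem[OF P st] by simp_all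
  fix e f assume "e \<in> E s" "f \<in> E t"
  note inner = product_system_cinner_mult[OF P st \<open>e \<in> E s\<close> _ \<open>f \<in> E t\<close>]
  have "cinner (m s t e f) (m s t (x + x') y) = cinner e (x + x') * cinner f y"
    using \<open>x + x' \<in> E s\<close> \<open>y \<in> E t\<close> by (rule inner)
  also have "\<dots> = cinner e x * cinner f y + cinner e x' * cinner f y"
    by (simp add: cinner_add_right distrib_right)
  also have "\<dots> = cinner (m s t e f) (m s t x y + m s t x' y)"
    using assms by (simp add: cinner_add_right inner)
  finally show
      "cinner (m s t e f) (m s t (x + x') y) = cinner (m s t e f) (m s t x y + m s t x' y)" .
qed

lemma product_system_add_right:
  assumes P: "product_system E m" and st: "s > 0" "t > 0"
    and "x \<in> E s" "y \<in> E t" "y' \<in> E t"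
  shows "m s t x (y + y') = m s t x y + m s t x y'"
proof (rule product_system_eq_if_cinner_mult_eq[OF P st])
  have "y + y' \<in> E t" "\<And>a b. a \<in> E (s + t) \<Longrightarrow> b \<in> E (s + t) \<Longrightarrow> a + b \<in> E (s + t)"
    using assms product_system_csubspace[OF P] by (simp_all add: csubspace_def)
  then show "m s t x (y + y') \<in> E (s + t)" "m s t x y + m s t x y' \<in> E (s + t)"
    using assms product_system_mult_mem[OF P st] by simp_all
  fix e f assume "e \<in> E s" "f \<in> E t"
  note inner = product_system_cinner_mult[OF P st \<open>e \<in> E s\<close> _ \<open>f \<in> E t\<close>]
  have "cinner (m s t e f) (m s t x (y + y')) = cinner e x * cinner f (y + y')"
    using \<open>x \<in> E s\<close> \<open>y + y' \<in> E t\<close> by (rule inner)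
  also have "\<dots> = cinner e x * cinner f y + cinner e x * cinner f y'"
    by (simp add: cinner_add_right distrib_left)
  also have "\<dots> = cinner (m s t e f) (m s t x y + m s t x y')"
    using assms by (simp add: cinner_add_right inner)
  finally show
      "cinner (m s t e f) (m s t x (y + y')) = cinner (m s t e f) (m s t x y + m s t x y')" .
qed

lemma generated_byD:
  assumes "generated_by G m S"
    and "\<And>t. t > 0 \<Longrightarrow> csubspace (H t) \<and> closed (H t) \<and> S t \<subseteq> H t \<and> H t \<subseteq> G t"
    and "\<And>s t x y. s > 0 \<Longrightarrow> t > 0 \<Longrightarrow> x \<in> H s \<Longrightarrow> y \<in> H t \<Longrightarrow> m s t x y \<in> H (s + t)"
    and "t > 0"
  shows "H t = G t"
proof -
  have "(\<forall>t>0. csubspace (H t) \<and> closed (H t) \<and> S t \<subseteq> H t \<and> H t \<subseteq> G t) \<and>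
      (\<forall>s>0. \<forall>t>0. \<forall>x\<in>H s. \<forall>y\<in>H t. m s t x y \<in> H (s + t))"
    using assms(2,3) by simp
  then show ?thesis
    using assms(1,4) unfolding generated_by_def by simp
qed

lemma
  assumes "isometric_morphism E mE G mG I"
  shows isometric_morphism_mem: "t > 0 \<Longrightarrow> x \<in> E t \<Longrightarrow> I t x \<in> G t"
    and isometric_morphism_fibre: "t > 0 \<Longrightarrow> clinear_isometry_on (E t) (I t)"
    and isometric_morphism_mult:
      "s > 0 \<Longrightarrow> t > 0 \<Longrightarrow> x \<in> E s \<Longrightarrow> y \<in> E t \<Longrightarrow> I (s + t) (mE s t x y) = mG s t (I s x) (I t y)"
  using assms unfolding isometric_morphism_def clinear_isometry_on_def by simp_all

lemma isometric_morphism_adjoint_family: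
  assumes P: "product_system E mE" and I: "isometric_morphism E mE G mG I"
  obtains a where "\<And>t. t > 0 \<Longrightarrow> a t \<in> E t"
    and "\<And>t e. t > 0 \<Longrightarrow> e \<in> E t \<Longrightarrow> cinner (I t e) (g t) = cinner e (a t)"
proof -
  have "\<exists>a. t > 0 \<longrightarrow> a \<in> E t \<and> (\<forall>e\<in>E t. cinner (I t e) (g t) = cinner e a)" for t
  proof (cases "t > 0")
    case True
    then obtain a where "a \<in> E t" "\<And>e. e \<in> E t \<Longrightarrow> cinner (I t e) (g t) = cinner e a"
      using clinear_isometry_on_adjoint[OF product_system_complete[OF P]
          product_system_csubspace[OF P] isometric_morphism_fibre[OF I]] by blast
    then show ?thesis by blast
  qed simp
  then obtain a where "\<forall>t. t > 0 \<longrightarrow> a t \<in> E t \<and> (\<forall>e\<in>E t. cinner (I t e) (g t) = cinner e (a t))"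
    by (rule choice[OF allI, THEN exE])
  then show ?thesis
    by (intro that[of a]) auto
qed

section \<open>Additive units and roots\<close>

lemma cinner_mult_additive_unit:
  assumes P: "product_system G m" and \<sigma>: "\<And>t. t > 0 \<Longrightarrow> \<sigma> t \<in> G t"
    and c: "additive_unit G m \<sigma> c"
    and st: "s > 0" "t > 0" and "x \<in> G s" "y \<in> G t"
  shows "cinner (m s t x y) (c (s + t)) =
           cinner x (c s) * cinner y (\<sigma> t) + cinner x (\<sigma> s) * cinner y (c t)"
proof -
  have "c (s + t) = m s t (c s) (\<sigma> t) + m s t (\<sigma> s) (c t)" and "c s \<in> G s" "c t \<in> G t"
    using c st unfolding additive_unit_def by blast+
  then show ?thesis
    using product_system_cinner_mult[OF P st \<open>x \<in> G s\<close> _ \<open>y \<in> G t\<close>] \<sigma> st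
    by (simp add: cinner_add_right)
qed

lemma additive_unit_eq_if_cinner_generators_eq:
  assumes P: "product_system G m" and gen: "generated_by G m S"
    and SG: "\<And>t. t > 0 \<Longrightarrow> S t \<subseteq> G t" and \<sigma>: "\<And>t. t > 0 \<Longrightarrow> \<sigma> t \<in> G t"
    and c: "additive_unit G m \<sigma> c" and w: "additive_unit G m \<sigma> w"
    and eq: "\<And>t x. t > 0 \<Longrightarrow> x \<in> S t \<Longrightarrow> cinner x (c t) = cinner x (w t)"
    and "t > 0"
  shows "c t = w t"
proof -
  define H where "H t = G t \<inter> {x. cinner x (c t - w t) = 0}" for t
  have "csubspace (H t) \<and> closed (H t) \<and> S t \<subseteq> H t \<and> H t \<subseteq> G t" if "t > 0" for t
  proof (intro conjI)
    show "csubspace (H t)"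
      unfolding H_def
      by (intro csubspace_Int csubspace_cinner_orthogonal product_system_csubspace[OF P that])
    show "closed (H t)"
      unfolding H_def
      by (intro closed_Int closed_cinner_orthogonal complete_imp_closed
          product_system_complete[OF P that])
    show "S t \<subseteq> H t" "H t \<subseteq> G t"
      using SG eq that unfolding H_def by (auto simp: cinner_diff_right)
  qed
  moreover have "m s t x y \<in> H (s + t)" if st: "s > 0" "t > 0" and "x \<in> H s" "y \<in> H t" for s t x y
  proof -
    have "x \<in> G s" "y \<in> G t" "cinner x (c s) = cinner x (w s)" "cinner y (c t) = cinner y (w t)"
      using \<open>x \<in> H s\<close> \<open>y \<in> H t\<close> unfolding H_def by (simp_all add: cinner_diff_right)
    then show ?thesis
      unfolding H_def cinner_diff_right
      using cinner_mult_additive_unit[OF P \<sigma> c st] cinner_mult_additive_unit[OF P \<sigma> w st]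
        product_system_mult_mem[OF P st]
      by simp
  qed
  ultimately have "H t = G t"
    using generated_byD[OF gen _ _ \<open>t > 0\<close>] by blast
  moreover have "c t - w t \<in> G t"
    using c w \<open>t > 0\<close> product_system_csubspace[OF P \<open>t > 0\<close>]
    unfolding additive_unit_def by (simp add: csubspace_imp_subspace subspace_diff)
  ultimately have "cinner (c t - w t) (c t - w t) = 0"
    unfolding H_def by blast
  then show ?thesis
    by simp
qed

lemma
  assumes "is_root E m u a" and "t > 0"
  shows is_root_mem: "a t \<in> E t"
    and is_root_orthogonal: "cinner (u t) (a t) = 0"
  using assms cinner_commute[of "u t" "a t"] unfolding is_root_def additive_unit_def by auto

lemma is_root_isometric_image:
  assumes P: "product_system E mE" and I: "isometric_morphism E mE G mG I"
    and u: "is_unit E mE u" and \<sigma>: "\<And>t. t > 0 \<Longrightarrow> I t (u t) = \<sigma> t"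
    and a: "is_root E mE u a"
  shows "is_root G mG \<sigma> (\<lambda>t. I t (a t))"
proof -
  have uE: "\<And>t. t > 0 \<Longrightarrow> u t \<in> E t"
    using u unfolding is_unit_def by blast
  have aE: "\<And>t. t > 0 \<Longrightarrow> a t \<in> E t"
    and a_mult: "\<And>s t. s > 0 \<Longrightarrow> t > 0 \<Longrightarrow> a (s + t) = mE s t (a s) (u t) + mE s t (u s) (a t)"
    and a_orth: "\<And>t. t > 0 \<Longrightarrow> cinner (a t) (u t) = 0"
    using a unfolding is_root_def additive_unit_def by blast+
  show ?thesis
    unfolding is_root_def additive_unit_def
  proof (intro conjI allI impI)
    fix t :: real assume "t > 0"
    show "I t (a t) \<in> G t"
      using isometric_morphism_mem[OF I \<open>t > 0\<close> aE[OF \<open>t > 0\<close>]] .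
    show "cinner (I t (a t)) (\<sigma> t) = 0"
      using clinear_isometry_on_cinner[OF isometric_morphism_fibre[OF I \<open>t > 0\<close>] aE uE] a_orth
        \<sigma> \<open>t > 0\<close> by simp
  next
    fix s t :: real assume st: "s > 0" "t > 0"
    have "I (s + t) (a (s + t)) = I (s + t) (mE s t (a s) (u t)) + I (s + t) (mE s t (u s) (a t))"
      using a_mult[OF st] clinear_isometry_on_add[OF isometric_morphism_fibre[OF I]]
        product_system_mult_mem[OF P st] aE uE st by simp
    also have "\<dots> = mG s t (I s (a s)) (\<sigma> t) + mG s t (\<sigma> s) (I t (a t))"
      using isometric_morphism_mult[OF I st] aE uE \<sigma> st by simp
    finally show "I (s + t) (a (s + t)) = mG s t (I s (a s)) (\<sigma> t) + mG s t (\<sigma> s) (I t (a t))" .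
  qed
qed

lemma is_root_add:
  assumes P: "product_system G m" and \<sigma>: "\<And>t. t > 0 \<Longrightarrow> \<sigma> t \<in> G t"
    and c: "is_root G m \<sigma> c" and d: "is_root G m \<sigma> d"
  shows "is_root G m \<sigma> (\<lambda>t. c t + d t)"
proof -
  have cG: "\<And>t. t > 0 \<Longrightarrow> c t \<in> G t" and dG: "\<And>t. t > 0 \<Longrightarrow> d t \<in> G t"
    and c_mult: "\<And>s t. s > 0 \<Longrightarrow> t > 0 \<Longrightarrow> c (s + t) = m s t (c s) (\<sigma> t) + m s t (\<sigma> s) (c t)"
    and d_mult: "\<And>s t. s > 0 \<Longrightarrow> t > 0 \<Longrightarrow> d (s + t) = m s t (d s) (\<sigma> t) + m s t (\<sigma> s) (d t)"
    and "\<And>t. t > 0 \<Longrightarrow> cinner (c t) (\<sigma> t) = 0" "\<And>t. t > 0 \<Longrightarrow> cinner (d t) (\<sigma> t) = 0"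
    using c d unfolding is_root_def additive_unit_def by blast+
  moreover have "c t + d t \<in> G t" if "t > 0" for t
    using product_system_csubspace[OF P that] cG[OF that] dG[OF that] by (simp add: csubspace_def)
  moreover have "c (s + t) + d (s + t) = m s t (c s + d s) (\<sigma> t) + m s t (\<sigma> s) (c t + d t)"
    if st: "s > 0" "t > 0" for s t
    using c_mult[OF st] d_mult[OF st] cG dG \<sigma> st
    by (simp add: product_system_add_left[OF P st] product_system_add_right[OF P st])
  ultimately show ?thesis
    unfolding is_root_def additive_unit_def by (simp add: cinner_add_left)
qed

lemma is_root_adjoint:
  assumes PE: "product_system E mE" and PG: "product_system G mG"
    and I: "isometric_morphism E mE G mG I"
    and u: "is_unit E mE u" and \<sigma>: "\<And>t. t > 0 \<Longrightarrow> I t (u t) = \<sigma> t"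
    and c: "is_root G mG \<sigma> c"
    and aE: "\<And>t. t > 0 \<Longrightarrow> a t \<in> E t"
    and adj: "\<And>t e. t > 0 \<Longrightarrow> e \<in> E t \<Longrightarrow> cinner (I t e) (c t) = cinner e (a t)"
  shows "is_root E mE u a"
proof -
  have uE: "\<And>t. t > 0 \<Longrightarrow> u t \<in> E t"
    using u unfolding is_unit_def by blast
  have \<sigma>G: "\<And>t. t > 0 \<Longrightarrow> \<sigma> t \<in> G t"
    using isometric_morphism_mem[OF I] uE \<sigma> by metis
  have c_add: "additive_unit G mG \<sigma> c" and c_orth: "\<And>t. t > 0 \<Longrightarrow> cinner (c t) (\<sigma> t) = 0"
    using c unfolding is_root_def by blast+
  have "cinner (a t) (u t) = 0" if "t > 0" for t
    using adj[OF that uE[OF that]] c_orth[OF that] \<sigma>[OF that]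
      cinner_commute[of "a t" "u t"] cinner_commute[of "c t" "\<sigma> t"] by simp
  moreover have "a (s + t) = mE s t (a s) (u t) + mE s t (u s) (a t)" if st: "s > 0" "t > 0" for s t
  proof (rule product_system_eq_if_cinner_mult_eq[OF PE st])
    show "a (s + t) \<in> E (s + t)"
      using aE st by simp
    show "mE s t (a s) (u t) + mE s t (u s) (a t) \<in> E (s + t)"
      using product_system_csubspace[OF PE, of "s + t"] product_system_mult_mem[OF PE st] aE uE st
      by (simp add: csubspace_def)
    fix x y assume "x \<in> E s" "y \<in> E t"
    note I_inner = clinear_isometry_on_cinner[OF isometric_morphism_fibre[OF I]]
    have "cinner (mE s t x y) (a (s + t)) = cinner (mG s t (I s x) (I t y)) (c (s + t))"
      using adj[of "s + t" "mE s t x y"] isometric_morphism_mult[OF I st \<open>x \<in> E s\<close> \<open>y \<in> E t\<close>]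
        product_system_mult_mem[OF PE st \<open>x \<in> E s\<close> \<open>y \<in> E t\<close>] st by simp
    also have "\<dots> = cinner x (a s) * cinner y (u t) + cinner x (u s) * cinner y (a t)"
      using cinner_mult_additive_unit[OF PG \<sigma>G c_add st] isometric_morphism_mem[OF I]
        \<open>x \<in> E s\<close> \<open>y \<in> E t\<close> adj I_inner uE \<sigma>[symmetric] st by simp
    also have "\<dots> = cinner (mE s t x y) (mE s t (a s) (u t) + mE s t (u s) (a t))"
      using product_system_cinner_mult[OF PE st \<open>x \<in> E s\<close> _ \<open>y \<in> E t\<close>] aE uE st
      by (simp add: cinner_add_right)
    finally show "cinner (mE s t x y) (a (s + t)) =
        cinner (mE s t x y) (mE s t (a s) (u t) + mE s t (u s) (a t))" .
  qed
  ultimately show ?thesis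
    using aE unfolding is_root_def additive_unit_def by blast
qed

section \<open>Amalgamation along normalized units\<close>

locale unit_amalgamation =
  fixes E :: "real \<Rightarrow> 'e::complex_inner set" and mE :: "real \<Rightarrow> real \<Rightarrow> 'e \<Rightarrow> 'e \<Rightarrow> 'e"
    and F :: "real \<Rightarrow> 'f::complex_inner set" and mF :: "real \<Rightarrow> real \<Rightarrow> 'f \<Rightarrow> 'f \<Rightarrow> 'f"
    and G :: "real \<Rightarrow> 'g::complex_inner set" and mG :: "real \<Rightarrow> real \<Rightarrow> 'g \<Rightarrow> 'g \<Rightarrow> 'g"
    and u0 :: "real \<Rightarrow> 'e" and v0 :: "real \<Rightarrow> 'f"
    and I :: "real \<Rightarrow> 'e \<Rightarrow> 'g" and J :: "real \<Rightarrow> 'f \<Rightarrow> 'g"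
  assumes E_product_system: "product_system E mE" and F_product_system: "product_system F mF"
    and u0_normalized: "normalized_unit E mE u0" and v0_normalized: "normalized_unit F mF v0"
    and amalgamated:
      "amalgamated_product E mE F mF (\<lambda>t y. scaleC (cinner (v0 t) y) (u0 t)) G mG I J"
begin

lemma G_product_system: "product_system G mG"
  and I_isometric: "isometric_morphism E mE G mG I"
  and J_isometric: "isometric_morphism F mF G mG J"
  and G_generated: "generated_by G mG (\<lambda>t. I t ` E t \<union> J t ` F t)"
  using amalgamated unfolding amalgamated_product_def by simp_all

lemma cinner_I_J:
  assumes "t > 0" "x \<in> E t" "y \<in> F t"
  shows "cinner (I t x) (J t y) = cinner (v0 t) y * cinner x (u0 t)"
  using amalgamated assms unfolding amalgamated_product_def by (simp add: cinner_scaleC_right)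

lemma u0_unit: "is_unit E mE u0" and v0_unit: "is_unit F mF v0"
  using u0_normalized v0_normalized unfolding normalized_unit_def by simp_all

lemma
  assumes "t > 0"
  shows u0_mem: "u0 t \<in> E t" and cinner_u0_u0: "cinner (u0 t) (u0 t) = 1"
    and v0_mem: "v0 t \<in> F t" and cinner_v0_v0: "cinner (v0 t) (v0 t) = 1"
  using u0_normalized v0_normalized assms unfolding normalized_unit_def is_unit_def
  by (simp_all add: cinner_self)

lemma J_v0_eq_I_u0:
  assumes "t > 0"
  shows "J t (v0 t) = I t (u0 t)"
proof (rule cinner_eq_1_imp_eq)
  show "cinner (J t (v0 t)) (J t (v0 t)) = 1"
    using clinear_isometry_on_cinner[OF isometric_morphism_fibre[OF J_isometric assms]]
      v0_mem cinner_v0_v0 assms by simp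
  show "cinner (I t (u0 t)) (I t (u0 t)) = 1"
    using clinear_isometry_on_cinner[OF isometric_morphism_fibre[OF I_isometric assms]]
      u0_mem cinner_u0_u0 assms by simp
  show "cinner (J t (v0 t)) (I t (u0 t)) = 1"
    using cinner_I_J[OF assms u0_mem v0_mem] cinner_u0_u0 cinner_v0_v0 assms
      cinner_commute[of "J t (v0 t)" "I t (u0 t)"] by simp
qed

lemma root_sum:
  assumes "is_root E mE u0 a" and "is_root F mF v0 b"
  shows "is_root G mG (\<lambda>t. I t (u0 t)) (\<lambda>t. I t (a t) + J t (b t))"
proof (rule is_root_add[OF G_product_system])
  show "I t (u0 t) \<in> G t" if "t > 0" for t
    using isometric_morphism_mem[OF I_isometric that u0_mem[OF that]] .
  show "is_root G mG (\<lambda>t. I t (u0 t)) (\<lambda>t. I t (a t))"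
    by (rule is_root_isometric_image[OF E_product_system I_isometric u0_unit refl assms(1)])
  show "is_root G mG (\<lambda>t. I t (u0 t)) (\<lambda>t. J t (b t))"
    by (rule is_root_isometric_image[OF F_product_system J_isometric v0_unit J_v0_eq_I_u0 assms(2)])
qed

lemma roots_orthogonal:
  assumes "is_root E mE u0 a" "is_root F mF v0 b" "t > 0"
  shows "cinner (I t (a t)) (J t (b t)) = 0"
  using cinner_I_J[OF \<open>t > 0\<close> is_root_mem[OF assms(1,3)] is_root_mem[OF assms(2,3)]]
    is_root_orthogonal[OF assms(2,3)] by simp

lemma root_eq_sum_of_adjoints:
  assumes c: "is_root G mG (\<lambda>t. I t (u0 t)) c"
    and a: "is_root E mE u0 a"
    and a_adj: "\<And>t e. t > 0 \<Longrightarrow> e \<in> E t \<Longrightarrow> cinner (I t e) (c t) = cinner e (a t)"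
    and b: "is_root F mF v0 b"
    and b_adj: "\<And>t f. t > 0 \<Longrightarrow> f \<in> F t \<Longrightarrow> cinner (J t f) (c t) = cinner f (b t)"
    and "t > 0"
  shows "c t = I t (a t) + J t (b t)"
proof (rule additive_unit_eq_if_cinner_generators_eq[OF G_product_system G_generated, OF _ _ _ _ _
      \<open>t > 0\<close>])
  show "I t ` E t \<union> J t ` F t \<subseteq> G t" "I t (u0 t) \<in> G t" if "t > 0" for t
    using isometric_morphism_mem[OF I_isometric that] isometric_morphism_mem[OF J_isometric that]
      u0_mem[OF that]
    by blast+
  show "additive_unit G mG (\<lambda>t. I t (u0 t)) c"
    using c unfolding is_root_def by blast
  show "additive_unit G mG (\<lambda>t. I t (u0 t)) (\<lambda>t. I t (a t) + J t (b t))"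
    using root_sum[OF a b] unfolding is_root_def by blast
next
  fix t x assume "t > 0" and "x \<in> I t ` E t \<union> J t ` F t"
  then consider (from_E) e where "e \<in> E t" "x = I t e" | (from_F) f where "f \<in> F t" "x = J t f"
    by blast
  then show "cinner x (c t) = cinner x (I t (a t) + J t (b t))"
  proof cases
    case from_E
    have "cinner (I t e) (J t (b t)) = 0"
      using cinner_I_J[OF \<open>t > 0\<close> \<open>e \<in> E t\<close> is_root_mem[OF b \<open>t > 0\<close>]]
        is_root_orthogonal[OF b \<open>t > 0\<close>] by simp
    then show ?thesis
      using from_E a_adj[OF \<open>t > 0\<close>] is_root_mem[OF a \<open>t > 0\<close>]
        clinear_isometry_on_cinner[OF isometric_morphism_fibre[OF I_isometric \<open>t > 0\<close>]]
      by (simp add: cinner_add_right)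
  next
    case from_F
    have "cinner (I t (a t)) (J t f) = 0"
      using cinner_I_J[OF \<open>t > 0\<close> is_root_mem[OF a \<open>t > 0\<close>] \<open>f \<in> F t\<close>]
        is_root_orthogonal[OF a \<open>t > 0\<close>] cinner_commute[of "a t" "u0 t"] by simp
    then have "cinner (J t f) (I t (a t)) = 0"
      using cinner_commute[of "J t f" "I t (a t)"] by simp
    then show ?thesis
      using from_F b_adj[OF \<open>t > 0\<close>] is_root_mem[OF b \<open>t > 0\<close>]
        clinear_isometry_on_cinner[OF isometric_morphism_fibre[OF J_isometric \<open>t > 0\<close>]]
      by (simp add: cinner_add_right)
  qed
qed

lemma root_decomposition:
  assumes c: "is_root G mG (\<lambda>t. I t (u0 t)) c"
  obtains a b where "is_root E mE u0 a" and "is_root F mF v0 b"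
    and "\<And>t. t > 0 \<Longrightarrow> c t = I t (a t) + J t (b t)"
proof -
  obtain a where aE: "\<And>t. t > 0 \<Longrightarrow> a t \<in> E t"
    and a_adj: "\<And>t e. t > 0 \<Longrightarrow> e \<in> E t \<Longrightarrow> cinner (I t e) (c t) = cinner e (a t)"
    using isometric_morphism_adjoint_family[OF E_product_system I_isometric, where g = c] by blast
  obtain b where bF: "\<And>t. t > 0 \<Longrightarrow> b t \<in> F t"
    and b_adj: "\<And>t f. t > 0 \<Longrightarrow> f \<in> F t \<Longrightarrow> cinner (J t f) (c t) = cinner f (b t)"
    using isometric_morphism_adjoint_family[OF F_product_system J_isometric, where g = c] by blast
  have a: "is_root E mE u0 a"
    using E_product_system G_product_system I_isometric u0_unit refl c aE a_adj
    by (rule is_root_adjoint)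
  have b: "is_root F mF v0 b"
    using F_product_system G_product_system J_isometric v0_unit J_v0_eq_I_u0 c bF b_adj
    by (rule is_root_adjoint)
  show ?thesis
    using that[OF a b root_eq_sum_of_adjoints[OF c a a_adj b b_adj]] .
qed

end

theorem mainTheorem7:
  fixes E :: "real \<Rightarrow> 'e::complex_inner set" and mE :: "real \<Rightarrow> real \<Rightarrow> 'e \<Rightarrow> 'e \<Rightarrow> 'e"
    and F :: "real \<Rightarrow> 'f::complex_inner set" and mF :: "real \<Rightarrow> real \<Rightarrow> 'f \<Rightarrow> 'f \<Rightarrow> 'f"
    and G :: "real \<Rightarrow> 'g::complex_inner set" and mG :: "real \<Rightarrow> real \<Rightarrow> 'g \<Rightarrow> 'g \<Rightarrow> 'g"
    and u0 :: "real \<Rightarrow> 'e" and v0 :: "real \<Rightarrow> 'f"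
    and I :: "real \<Rightarrow> 'e \<Rightarrow> 'g" and J :: "real \<Rightarrow> 'f \<Rightarrow> 'g"
  assumes "product_system E mE" and "product_system F mF"
    and "normalized_unit E mE u0" and "normalized_unit F mF v0"
    and "amalgamated_product E mE F mF (\<lambda>t y. scaleC (cinner (v0 t) y) (u0 t)) G mG I J"
  shows "roots G mG (\<lambda>t. I t (u0 t))
           = {I 1 x + J 1 y |x y. x \<in> roots E mE u0 \<and> y \<in> roots F mF v0}
         \<and> (\<forall>x\<in>roots E mE u0. \<forall>y\<in>roots F mF v0. cinner (I 1 x) (J 1 y) = 0)"
proof -
  interpret unit_amalgamation E mE F mF G mG u0 v0 I J
    using assms by unfold_locales
  have "c 1 \<in> {I 1 x + J 1 y |x y. x \<in> roots E mE u0 \<and> y \<in> roots F mF v0}"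
    if c: "is_root G mG (\<lambda>t. I t (u0 t)) c" for c
  proof -
    obtain a b where "is_root E mE u0 a" "is_root F mF v0 b" "c 1 = I 1 (a 1) + J 1 (b 1)"
      using root_decomposition[OF c] zero_less_one by metis
    then show ?thesis
      unfolding roots_def by blast
  qed
  moreover have "I 1 (a 1) + J 1 (b 1) \<in> roots G mG (\<lambda>t. I t (u0 t))"
    if "is_root E mE u0 a" "is_root F mF v0 b" for a b
    using root_sum[OF that] unfolding roots_def
    by (auto intro!: exI[of _ "\<lambda>t. I t (a t) + J t (b t)"])
  moreover have "cinner (I 1 (a 1)) (J 1 (b 1)) = 0"
    if "is_root E mE u0 a" "is_root F mF v0 b" for a b
    using roots_orthogonal[OF that zero_less_one] .
  ultimately show ?thesis
    unfolding roots_def by blast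
qed

end
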